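(* In the setting of the context, two elements of $\mathbb J'$ are $\mathbb J$-conjugate if and only if they are $\mathbb J'$-conjugate.
   Context: Fix a prime $p$. $\mathbb J$ is a finite group, $\mathbb J_1$ a normal subgroup of $\mathbb J$ with center $Z$, and $\mathbb J'$ a subgroup of $\mathbb J$ with $\mathbb J=\mathbb J'\mathbb J_1$ and $\mathbb J'\cap\mathbb J_1\subset Z$. Assume: (i) $\mathbb J_1$ is a $p$-group which is either extraspecial of class $2$ or abelian; (ii) $\mathbb J'=T\mathbb J'_1$ with $T$ an abelian subgroup of $\mathbb J'$ and $\mathbb J'_1$ a normal $p$-subgroup which is either extraspecial of class $2$ with center $Z'\supset\mathbb J'_1\cap T$, or abelian (then $Z':=\mathbb J'_1$); (iii) $[\mathbb J'_1,\mathbb J_1]=1$; (iv) $\mathbb J'/\mathbb J'_1$ has order prime to $p$; (v) $Z'Z$ is contained in the center of $\mathbb J$ and $\mathbb J'_1\mathbb J_1$ is an extraspecial $p$-group of class $2$ with center $Z'Z$. Let $\theta$ be a faithful character of $Z$ and $\theta'$ a faithful character of $Z'$ agreeing on $Z\cap Z'$. *)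

theory Defs
  imports "HOL-Algebra.Algebra"
begin

definition center_of :: "('a, 'b) monoid_scheme \<Rightarrow> 'a set \<Rightarrow> 'a set" where
  "center_of G H = {x \<in> H. \<forall>y \<in> H. x \<otimes>\<^bsub>G\<^esub> y = y \<otimes>\<^bsub>G\<^esub> x}"

definition p_subgroup :: "nat \<Rightarrow> ('a, 'b) monoid_scheme \<Rightarrow> 'a set \<Rightarrow> bool" where
  "p_subgroup p G H \<longleftrightarrow> subgroup H G \<and> finite H \<and> (\<exists>n. card H = p ^ n)"

definition abelian_subgroup :: "('a, 'b) monoid_scheme \<Rightarrow> 'a set \<Rightarrow> bool" where
  "abelian_subgroup G H \<longleftrightarrow> subgroup H G \<and>
     (\<forall>x \<in> H. \<forall>y \<in> H. x \<otimes>\<^bsub>G\<^esub> y = y \<otimes>\<^bsub>G\<^esub> x)"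

text \<open>Extraspecial p-group of class 2 (in the loose sense of the paper): a p-group P
  whose commutator subgroup is contained in its center and such that P modulo its
  center is elementary abelian (every p-th power is central).\<close>
definition extraspecial2 :: "nat \<Rightarrow> ('a, 'b) monoid_scheme \<Rightarrow> 'a set \<Rightarrow> bool" where
  "extraspecial2 p G P \<longleftrightarrow> p_subgroup p G P \<and>
     derived G P \<subseteq> center_of G P \<and>
     (\<forall>x \<in> P. x [^]\<^bsub>G\<^esub> p \<in> center_of G P)"

definition conj_in :: "('a, 'b) monoid_scheme \<Rightarrow> 'a set \<Rightarrow> 'a \<Rightarrow> 'a \<Rightarrow> bool" where
  "conj_in G H x y \<longleftrightarrow> (\<exists>g \<in> H. g \<otimes>\<^bsub>G\<^esub> x \<otimes>\<^bsub>G\<^esub> inv\<^bsub>G\<^esub> g = y)"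

end

theory Submission
  imports Defs
begin

text \<open>Write \<open>g = a b\<close> with \<open>a \<in> J'\<close>, \<open>b \<in> J\<^sub>1\<close>, and \<open>x = t n\<close> with \<open>t \<in> T\<close>, \<open>n \<in> J'\<^sub>1\<close>.
  If \<open>y = g x g\<inverse>\<close> lies in \<open>J'\<close>, the commutator \<open>z = [b, x] = [b, t]\<close> lies in
  \<open>J' \<inter> J\<^sub>1 \<subseteq> Z\<close>, hence is central in \<open>J\<close>, so that \<open>[b, t\<^sup>m] = z\<^sup>m\<close>. For \<open>m = |J'/J'\<^sub>1|\<close> the
  power \<open>t\<^sup>m\<close> lies in \<open>J'\<^sub>1\<close>, which commutes with \<open>b\<close>, so \<open>z\<^sup>m = 1\<close>. The order of \<open>z \<in> J\<^sub>1\<close> also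
  divides the \<open>p\<close>-power \<open>|J\<^sub>1|\<close>, which is coprime to \<open>m\<close>; hence \<open>z = 1\<close>, \<open>b\<close> centralises \<open>x\<close>,
  and \<open>a \<in> J'\<close> already conjugates \<open>x\<close> to \<open>y\<close>.\<close>

definition commutator :: "('a, 'b) monoid_scheme \<Rightarrow> 'a \<Rightarrow> 'a \<Rightarrow> 'a" where
  "commutator G x y = x \<otimes>\<^bsub>G\<^esub> y \<otimes>\<^bsub>G\<^esub> inv\<^bsub>G\<^esub> x \<otimes>\<^bsub>G\<^esub> inv\<^bsub>G\<^esub> y"

context group
begin

lemma commutator_closed [simp]:
  "x \<in> carrier G \<Longrightarrow> y \<in> carrier G \<Longrightarrow> commutator G x y \<in> carrier G"
  by (simp add: commutator_def)

lemma commutator_eq_one_iff: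
  "x \<in> carrier G \<Longrightarrow> y \<in> carrier G \<Longrightarrow> commutator G x y = \<one> \<longleftrightarrow> x \<otimes> y = y \<otimes> x"
  unfolding commutator_def by (simp add: inv_solve_right')

lemma inv_cancel_left: "x \<in> carrier G \<Longrightarrow> y \<in> carrier G \<Longrightarrow> inv x \<otimes> (x \<otimes> y) = y"
  by (simp flip: m_assoc)

lemma commute_inv_right:
  assumes "x \<in> carrier G" "y \<in> carrier G" "x \<otimes> y = y \<otimes> x"
  shows "x \<otimes> inv y = inv y \<otimes> x"
proof -
  have "inv y \<otimes> x \<otimes> y = x"
    using assms by (simp add: m_assoc assms(3) inv_cancel_left)
  then show ?thesis
    using assms inv_solve_right' by simp
qed

lemma commutator_mult_commuting_right:
  assumes "b \<in> carrier G" "t \<in> carrier G" "n \<in> carrier G" "b \<otimes> n = n \<otimes> b"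
  shows "commutator G b (t \<otimes> n) = commutator G b t"
proof -
  have "commutator G b (t \<otimes> n) = b \<otimes> (t \<otimes> (n \<otimes> inv b) \<otimes> inv n) \<otimes> inv t"
    using assms by (simp add: commutator_def m_assoc inv_mult_group)
  also have "n \<otimes> inv b = inv b \<otimes> n"
    using commute_inv_right assms by metis
  also have "t \<otimes> (inv b \<otimes> n) \<otimes> inv n = t \<otimes> inv b"
    using assms by (simp add: m_assoc)
  finally show ?thesis
    using assms by (simp add: commutator_def m_assoc)
qed

lemma conj_pow_eq_commutator_pow:
  assumes "b \<in> carrier G" "t \<in> carrier G"
    and "commutator G b t \<otimes> t = t \<otimes> commutator G b t"
  shows "b \<otimes> t [^] (k::nat) \<otimes> inv b = commutator G b t [^] k \<otimes> t [^] k"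
proof -
  have "b \<otimes> t [^] k \<otimes> inv b = (b \<otimes> t \<otimes> inv b) [^] k"
  proof (induction k)
    case (Suc k)
    have "b \<otimes> t [^] Suc k \<otimes> inv b = (b \<otimes> t [^] k \<otimes> inv b) \<otimes> (b \<otimes> t \<otimes> inv b)"
      using assms(1,2) by (simp add: m_assoc) (simp add: m_assoc[symmetric])
    then show ?case
      using Suc by simp
  qed (use assms(1) in simp)
  also have "b \<otimes> t \<otimes> inv b = commutator G b t \<otimes> t"
    using assms by (simp add: commutator_def m_assoc)
  finally show ?thesis
    using assms by (metis pow_mult_distrib commutator_closed)
qed

lemma eq_one_if_pow_coprime:
  assumes "z \<in> carrier G" "z [^] (m::nat) = \<one>" "z [^] (n::nat) = \<one>" "coprime m n"
  shows "z = \<one>"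
proof -
  have "ord z dvd m" "ord z dvd n"
    using assms pow_eq_id by auto
  with assms show ?thesis
    by (meson coprime_common_divisor_nat ord_eq_1)
qed

text \<open>If \<open>[b, t]\<close> commutes with \<open>t\<close>, then \<open>[b, t\<^sup>m] = [b, t]\<^sup>m\<close>; so \<open>[b, t]\<close> has order dividing \<open>m\<close>.\<close>
lemma commutator_eq_one_if_coprime:
  assumes "b \<in> carrier G" "t \<in> carrier G"
    and "commutator G b t \<otimes> t = t \<otimes> commutator G b t"
    and "b \<otimes> t [^] (m::nat) = t [^] m \<otimes> b"
    and "commutator G b t [^] (c::nat) = \<one>" and "coprime m c"
  shows "commutator G b t = \<one>"
proof -
  have "b \<otimes> t [^] m \<otimes> inv b = t [^] m"
    using assms(1,2,4) by (simp add: m_assoc)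
  then have "t [^] m = commutator G b t [^] m \<otimes> t [^] m"
    using conj_pow_eq_commutator_pow[OF assms(1-3), of m] by simp
  then have "commutator G b t [^] m = \<one>"
    using assms(1,2) by (metis l_one nat_pow_closed one_closed r_cancel commutator_closed)
  then show ?thesis
    using eq_one_if_pow_coprime assms(1,2,5,6) by simp
qed

lemma conj_mult_if_commutator_one:
  assumes "a \<in> carrier G" "b \<in> carrier G" "x \<in> carrier G" "commutator G b x = \<one>"
  shows "a \<otimes> b \<otimes> x \<otimes> inv (a \<otimes> b) = a \<otimes> x \<otimes> inv a"
proof -
  have "b \<otimes> x = x \<otimes> b"
    using assms commutator_eq_one_iff by blast
  then show ?thesis
    using assms by (simp add: inv_mult_group m_assoc flip: m_assoc[of b x]) (simp flip: m_assoc)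
qed

lemma commutator_mem_if_conj:
  assumes "subgroup H G" "a \<in> H" "b \<in> carrier G" "x \<in> H" "a \<otimes> b \<otimes> x \<otimes> inv (a \<otimes> b) = y" "y \<in> H"
  shows "commutator G b x \<in> H"
proof -
  have aG: "a \<in> carrier G" and xG: "x \<in> carrier G" and yG: "y \<in> carrier G"
    using assms subgroup.subset by blast+
  define w where "w = b \<otimes> x \<otimes> inv b"
  have wG: "w \<in> carrier G"
    unfolding w_def using assms(3) xG by simp
  have "a \<otimes> w \<otimes> inv a = y"
    using assms(3,5) aG xG by (simp add: w_def inv_mult_group m_assoc)
  then have "y \<otimes> a = a \<otimes> w"
    using inv_solve_right'[of y "a \<otimes> w" a] aG wG yG by simp
  then have "w = inv a \<otimes> y \<otimes> a"
    using inv_solve_left[of w a "y \<otimes> a"] aG wG yG by (simp add: m_assoc)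
  then show ?thesis
    using assms by (simp add: commutator_def w_def subgroup.m_closed subgroup.m_inv_closed)
qed

lemma pow_card_subgroup:
  assumes "subgroup H G" "z \<in> H"
  shows "z [^] card H = \<one>"
proof -
  interpret H: group "G\<lparr>carrier := H\<rparr>"
    using subgroup_imp_group[OF assms(1)] .
  have "z [^]\<^bsub>G\<lparr>carrier := H\<rparr>\<^esub> order (G\<lparr>carrier := H\<rparr>) = \<one>\<^bsub>G\<lparr>carrier := H\<rparr>\<^esub>"
    using assms(2) by (intro H.pow_order_eq_1) simp
  then show ?thesis
    by (simp add: order_def nat_pow_consistent[symmetric])
qed

end

lemma (in normal) commutator_mem:
  assumes "b \<in> H" "x \<in> carrier G"
  shows "commutator G b x \<in> H"
proof -
  have "x \<otimes> inv b \<otimes> inv x \<in> H"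
    using inv_op_closed2 assms by simp
  then show ?thesis
    using assms by (simp add: commutator_def m_assoc)
qed

lemma (in normal) pow_order_Mod_mem:
  assumes "t \<in> carrier G"
  shows "t [^] order (G Mod H) \<in> H"
proof -
  interpret Q: group "G Mod H"
    by (rule factorgroup_is_group)
  have hom: "(\<lambda>a. H #> a) \<in> hom G (G Mod H)"
    by (rule r_coset_hom_Mod)
  have "H #> (t [^] order (G Mod H)) = (H #> t) [^]\<^bsub>G Mod H\<^esub> order (G Mod H)"
    using hom_nat_pow[OF hom assms is_group Q.is_group] .
  also have "\<dots> = \<one>\<^bsub>G Mod H\<^esub>"
    using hom assms by (intro Q.pow_order_eq_1) (auto simp: hom_def)
  also have "\<dots> = H"
    by (simp add: FactGroup_def)
  finally show ?thesis
    using coset_join1 subgroup_axioms assms by blast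
qed

lemma (in group) center_of_subset_set_mult:
  assumes "subgroup K G" "A \<subseteq> carrier G"
  shows "A \<subseteq> center_of G K <#> A"
proof -
  have "\<one> \<in> center_of G K"
    using assms(1) subgroup.subset by (fastforce simp: center_of_def subgroup.one_closed)
  then show ?thesis
    using assms(2) unfolding set_mult_def by force
qed

theorem mainTheorem9:
  fixes p :: nat and J :: "('a, 'b) monoid_scheme"
    and J1 J' T J'1 :: "'a set"
  assumes prime: "Factorial_Ring.prime p"
    and grp: "group J" and fin: "finite (carrier J)"
    and J1_normal: "J1 \<lhd> J"
    and J'_sub: "subgroup J' J"
    and J_prod: "J' <#>\<^bsub>J\<^esub> J1 = carrier J"
    and J'_cap: "J' \<inter> J1 \<subseteq> center_of J J1"
    and i: "extraspecial2 p J J1 \<or> (p_subgroup p J J1 \<and> abelian_subgroup J J1)"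
    and T_sub: "abelian_subgroup J T" and T_in: "T \<subseteq> J'"
    and J'1_normal: "J'1 \<lhd> (J\<lparr>carrier := J'\<rparr>)"
    and J'_prod: "T <#>\<^bsub>J\<^esub> J'1 = J'"
    and ii: "(extraspecial2 p J J'1 \<and> J'1 \<inter> T \<subseteq> center_of J J'1)
             \<or> (p_subgroup p J J'1 \<and> abelian_subgroup J J'1)"
    and iii: "\<forall>a \<in> J'1. \<forall>b \<in> J1. a \<otimes>\<^bsub>J\<^esub> b = b \<otimes>\<^bsub>J\<^esub> a"
    and iv: "coprime p (order ((J\<lparr>carrier := J'\<rparr>) Mod J'1))"
    and v_central: "center_of J J'1 <#>\<^bsub>J\<^esub> center_of J J1 \<subseteq> center_of J (carrier J)"
    and v_extra: "extraspecial2 p J (J'1 <#>\<^bsub>J\<^esub> J1)"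
    and v_center: "center_of J (J'1 <#>\<^bsub>J\<^esub> J1)
                   = center_of J J'1 <#>\<^bsub>J\<^esub> center_of J J1"
    and x: "x \<in> J'" and y: "y \<in> J'"
  shows "conj_in J (carrier J) x y \<longleftrightarrow> conj_in J J' x y"
proof
  interpret J: group J by (rule grp)
  have J'c: "J' \<subseteq> carrier J" using J'_sub subgroup.subset by blast
  have J1_sub: "subgroup J1 J" using J1_normal normal_imp_subgroup by blast
  have J'1_sub: "subgroup J'1 J"
    using J.incl_subgroup[OF J'_sub normal_imp_subgroup[OF J'1_normal]] .
  show "conj_in J (carrier J) x y" if "conj_in J J' x y"
    using that J'c unfolding conj_in_def by blast
  assume "conj_in J (carrier J) x y"
  then obtain g where "g \<in> J' <#>\<^bsub>J\<^esub> J1" and "g \<otimes>\<^bsub>J\<^esub> x \<otimes>\<^bsub>J\<^esub> inv\<^bsub>J\<^esub> g = y"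
    unfolding conj_in_def J_prod by blast
  then obtain a b where ab: "a \<in> J'" "b \<in> J1"
    and y_eq: "a \<otimes>\<^bsub>J\<^esub> b \<otimes>\<^bsub>J\<^esub> x \<otimes>\<^bsub>J\<^esub> inv\<^bsub>J\<^esub> (a \<otimes>\<^bsub>J\<^esub> b) = y"
    unfolding set_mult_def by blast
  obtain t n where tn: "t \<in> T" "n \<in> J'1" and x_eq: "x = t \<otimes>\<^bsub>J\<^esub> n"
    using x J'_prod unfolding set_mult_def by blast
  have ac: "a \<in> carrier J" and bc: "b \<in> carrier J" and tc: "t \<in> carrier J" and nc: "n \<in> carrier J"
    using ab tn T_in J'c subgroup.subset[OF J1_sub] subgroup.subset[OF J'1_sub] by auto
  have bn: "b \<otimes>\<^bsub>J\<^esub> n = n \<otimes>\<^bsub>J\<^esub> b" using iii tn(2) ab(2) by metis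
  have z_eq: "commutator J b x = commutator J b t"
    unfolding x_eq using J.commutator_mult_commuting_right[OF bc tc nc bn] .
  have "commutator J b x \<in> J' \<inter> J1"
    using J.commutator_mem_if_conj[OF J'_sub ab(1) bc x y_eq y]
      normal.commutator_mem[OF J1_normal ab(2)] x J'c by auto
  then have "commutator J b t \<in> center_of J J1"
    using z_eq J'_cap by auto
  moreover have "center_of J J1 \<subseteq> center_of J J'1 <#>\<^bsub>J\<^esub> center_of J J1"
    using J.center_of_subset_set_mult[OF J'1_sub] subgroup.subset[OF J1_sub]
    by (simp add: center_of_def subset_iff)
  ultimately have "commutator J b t \<in> center_of J (carrier J)"
    using v_central by blast
  then have z_t: "commutator J b t \<otimes>\<^bsub>J\<^esub> t = t \<otimes>\<^bsub>J\<^esub> commutator J b t"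
    using tc unfolding center_of_def by blast
  define m where "m = order (J\<lparr>carrier := J'\<rparr> Mod J'1)"
  have "t [^]\<^bsub>J\<lparr>carrier := J'\<rparr>\<^esub> m \<in> J'1"
    unfolding m_def using tn(1) T_in by (intro normal.pow_order_Mod_mem[OF J'1_normal]) auto
  then have b_tm: "b \<otimes>\<^bsub>J\<^esub> t [^]\<^bsub>J\<^esub> m = t [^]\<^bsub>J\<^esub> m \<otimes>\<^bsub>J\<^esub> b"
    using iii ab(2) by (metis J.nat_pow_consistent)
  obtain k where "card J1 = p ^ k"
    using i unfolding extraspecial2_def p_subgroup_def by blast
  then have "coprime m (card J1)"
    using iv by (simp add: m_def ac_simps coprime_power_right_iff)
  then have "commutator J b x = \<one>\<^bsub>J\<^esub>"
    using z_eq J.commutator_eq_one_if_coprime[OF bc tc z_t b_tm] \<open>commutator J b x \<in> J' \<inter> J1\<close>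
      J.pow_card_subgroup[OF J1_sub] by auto
  then have "a \<otimes>\<^bsub>J\<^esub> x \<otimes>\<^bsub>J\<^esub> inv\<^bsub>J\<^esub> a = y"
    using J.conj_mult_if_commutator_one[OF ac bc] y_eq x J'c by auto
  then show "conj_in J J' x y"
    using ab(1) unfolding conj_in_def by blast
qed

end
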